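(* Let $H$ be a complex Hilbert space and let $T$ be a densely defined closed operator in $H$ with $D(T)\subset D(T^* )$, and write $T=A+iB$ where $A=\frac{T+T^*}{2}$ and $B=\frac{T-T^*}{2i}$ (both defined on $D(T)$). Assume that $A$ is positive or $B$ is positive. If $T$ is nilpotent, i.e. there is $n\in\mathbb{N}$ such that $T^n$ is well defined with $D(T^n)=D(T)$ and $T^nx=0$ for all $x\in D(T)$, then $T\in B(H)$, $T$ is normal, and $T=0$ everywhere on $H$.
   Context: Products of unbounded operators are taken on natural domains: $D(ST)=\{x\in D(T): Tx\in D(S)\}$; sums on $D(S+T)=D(S)\cap D(T)$. A symmetric operator $S$ (densely defined with $S\subset S^*$) is positive if $\langle Sx,x\rangle\geq 0$ for all $x\in D(S)$. $B(H)$ is the algebra of everywhere defined bounded operators on $H$. *)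

theory Defs
  imports "HOL-Analysis.Analysis"
begin

text \<open>The distribution has no complex inner product spaces, so we introduce them as a
type class: a real normed vector space with a compatible complex scalar multiplication and
a complex inner product (linear in the second, conjugate linear in the first argument)
inducing the norm.\<close>

class complex_inner = real_normed_vector +
  fixes scaleC :: "complex \<Rightarrow> 'a \<Rightarrow> 'a" (infixr \<open>*\<^sub>C\<close> 75)
  fixes cinner :: "'a \<Rightarrow> 'a \<Rightarrow> complex"
  assumes scaleC_add_right: "a *\<^sub>C (x + y) = a *\<^sub>C x + a *\<^sub>C y"
  and scaleC_add_left: "(a + b) *\<^sub>C x = a *\<^sub>C x + b *\<^sub>C x"
  and scaleC_scaleC: "a *\<^sub>C (b *\<^sub>C x) = (a * b) *\<^sub>C x"
  and scaleC_one: "1 *\<^sub>C x = x"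
  and scaleR_scaleC: "scaleR r x = complex_of_real r *\<^sub>C x"
  and cinner_commute: "cinner x y = cnj (cinner y x)"
  and cinner_add_right: "cinner x (y + z) = cinner x y + cinner x z"
  and cinner_scaleC_right: "cinner x (a *\<^sub>C y) = a * cinner x y"
  and cinner_self_norm: "cinner x x = complex_of_real ((norm x)\<^sup>2)"

class chilbert_space = complex_inner + complete_space

instantiation complex :: chilbert_space
begin
definition scaleC_complex :: "complex \<Rightarrow> complex \<Rightarrow> complex" where
  "scaleC_complex a x = a * x"
definition cinner_complex :: "complex \<Rightarrow> complex \<Rightarrow> complex" where
  "cinner_complex x y = cnj x * y"
instance
proof
  fix a b x y z :: complex and r :: real
  show "a *\<^sub>C (x + y) = a *\<^sub>C x + a *\<^sub>C y" by (simp add: scaleC_complex_def distrib_left)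
  show "(a + b) *\<^sub>C x = a *\<^sub>C x + b *\<^sub>C x" by (simp add: scaleC_complex_def distrib_right)
  show "a *\<^sub>C (b *\<^sub>C x) = (a * b) *\<^sub>C x" by (simp add: scaleC_complex_def mult.assoc)
  show "1 *\<^sub>C x = x" by (simp add: scaleC_complex_def)
  show "scaleR r x = complex_of_real r *\<^sub>C x" by (simp add: scaleC_complex_def scaleR_conv_of_real)
  show "cinner x y = cnj (cinner y x)" by (simp add: cinner_complex_def mult.commute)
  show "cinner x (y + z) = cinner x y + cinner x z" by (simp add: cinner_complex_def distrib_left)
  show "cinner x (a *\<^sub>C y) = a * cinner x y" by (simp add: cinner_complex_def scaleC_complex_def mult.left_commute)
  show "cinner x x = complex_of_real ((norm x)\<^sup>2)"
    unfolding cinner_complex_def by (metis complex_norm_square mult.commute)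
qed
end

text \<open>An operator in H is a pair (domain, action); the action outside the domain is
irrelevant.\<close>
type_synonym 'a op = "'a set \<times> ('a \<Rightarrow> 'a)"

definition op_dom :: "'a op \<Rightarrow> 'a set" where "op_dom T = fst T"
definition app :: "'a op \<Rightarrow> 'a \<Rightarrow> 'a" where "app T = snd T"

definition csubspace :: "'a::complex_inner set \<Rightarrow> bool" where
  "csubspace D \<longleftrightarrow> 0 \<in> D \<and> (\<forall>x\<in>D. \<forall>y\<in>D. x + y \<in> D) \<and> (\<forall>a. \<forall>x\<in>D. a *\<^sub>C x \<in> D)"

definition linear_op :: "'a::complex_inner op \<Rightarrow> bool" where
  "linear_op T \<longleftrightarrow> csubspace (op_dom T) \<and>
     (\<forall>x\<in>op_dom T. \<forall>y\<in>op_dom T. app T (x + y) = app T x + app T y) \<and>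
     (\<forall>a. \<forall>x\<in>op_dom T. app T (a *\<^sub>C x) = a *\<^sub>C app T x)"

definition densely_defined :: "'a::complex_inner op \<Rightarrow> bool" where
  "densely_defined T \<longleftrightarrow> closure (op_dom T) = UNIV"

definition graph :: "'a op \<Rightarrow> ('a \<times> 'a) set" where
  "graph T = {(x, app T x) | x. x \<in> op_dom T}"

definition closed_op :: "'a::complex_inner op \<Rightarrow> bool" where
  "closed_op T \<longleftrightarrow> closed (graph T)"

definition op_eq :: "'a op \<Rightarrow> 'a op \<Rightarrow> bool" where
  "op_eq S T \<longleftrightarrow> op_dom S = op_dom T \<and> (\<forall>x\<in>op_dom S. app S x = app T x)"

definition adj :: "'a::complex_inner op \<Rightarrow> 'a op" where
  "adj T = ({y. \<exists>z. \<forall>x\<in>op_dom T. cinner (app T x) y = cinner x z},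
            \<lambda>y. if \<exists>z. \<forall>x\<in>op_dom T. cinner (app T x) y = cinner x z
                then (THE z. \<forall>x\<in>op_dom T. cinner (app T x) y = cinner x z) else 0)"

definition op_comp :: "'a op \<Rightarrow> 'a op \<Rightarrow> 'a op" where
  "op_comp S T = ({x \<in> op_dom T. app T x \<in> op_dom S}, \<lambda>x. app S (app T x))"

definition op_id :: "'a op" where "op_id = (UNIV, \<lambda>x. x)"

primrec op_pow :: "'a op \<Rightarrow> nat \<Rightarrow> 'a op" where
  "op_pow T 0 = op_id"
| "op_pow T (Suc n) = op_comp T (op_pow T n)"

text \<open>Real and imaginary parts A = (T+T*)/2 and B = (T-T*)/(2i), defined on D(T)
(= D(T) \<inter> D(T*) under the standing hypothesis D(T) \<subseteq> D(T*)).\<close>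
definition re_part :: "'a::complex_inner op \<Rightarrow> 'a op" where
  "re_part T = (op_dom T \<inter> op_dom (adj T), \<lambda>x. (1/2) *\<^sub>C (app T x + app (adj T) x))"

definition im_part :: "'a::complex_inner op \<Rightarrow> 'a op" where
  "im_part T = (op_dom T \<inter> op_dom (adj T), \<lambda>x. (1/(2*\<i>)) *\<^sub>C (app T x - app (adj T) x))"

definition symmetric_op :: "'a::complex_inner op \<Rightarrow> bool" where
  "symmetric_op S \<longleftrightarrow> densely_defined S \<and> op_dom S \<subseteq> op_dom (adj S) \<and>
     (\<forall>x\<in>op_dom S. app (adj S) x = app S x)"

definition positive_op :: "'a::complex_inner op \<Rightarrow> bool" where
  "positive_op S \<longleftrightarrow> symmetric_op S \<and>
     (\<forall>x\<in>op_dom S. cinner (app S x) x \<in> \<real> \<and> Re (cinner (app S x) x) \<ge> 0)"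

definition in_BH :: "'a::complex_inner op \<Rightarrow> bool" where
  "in_BH T \<longleftrightarrow> op_dom T = UNIV \<and> linear_op T \<and> (\<exists>K. \<forall>x. norm (app T x) \<le> K * norm x)"

definition normal_op :: "'a::complex_inner op \<Rightarrow> bool" where
  "normal_op T \<longleftrightarrow> densely_defined T \<and> closed_op T \<and>
     op_eq (op_comp T (adj T)) (op_comp (adj T) T)"

end

theory Submission
  imports Defs
begin

text \<open>If the numerical range of T lies in a half-plane {z. 0 \<le> Re (theta * z)}, which is what
positivity of the real or imaginary part gives, then T^2 w = 0 forces T w = 0: for v = T w and
s = t * theta with t real, Re (theta * <T (s w + v), s w + v>) = |theta|^2 (t^2 Re (theta <v, w>) + t ||v||^2)
is nonnegative for all t, so v = 0. Hence a nilpotent T vanishes on D(T). Then D(T) is the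
preimage of the closed graph under x \<mapsto> (x, 0), so it is closed as well as dense, i.e. all of H,
and T = 0 is trivially bounded and normal.\<close>

lemma cinner_zero_right [simp]: "cinner (x::'a::complex_inner) 0 = 0"
  using cinner_add_right[of x 0 0] by simp

lemma cinner_zero_left [simp]: "cinner 0 (x::'a::complex_inner) = 0"
  by (metis cinner_zero_right cinner_commute complex_cnj_zero)

lemma cinner_add_left: "cinner ((x::'a::complex_inner) + y) z = cinner x z + cinner y z"
  by (metis cinner_add_right cinner_commute complex_cnj_add)

lemma cinner_scaleC_left: "cinner (a *\<^sub>C (x::'a::complex_inner)) y = cnj a * cinner x y"
  by (metis cinner_commute cinner_scaleC_right complex_cnj_mult)

lemma cinner_minus_right: "cinner (x::'a::complex_inner) (- y) = - cinner x y"
  using cinner_add_right[of x y "- y"] by (simp add: add_eq_0_iff)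

lemma cinner_minus_left: "cinner (- (x::'a::complex_inner)) y = - cinner x y"
  by (metis cinner_minus_right cinner_commute complex_cnj_minus)

lemma cinner_diff_right: "cinner (x::'a::complex_inner) (y - z) = cinner x y - cinner x z"
  unfolding diff_conv_add_uminus by (simp only: cinner_add_right cinner_minus_right)

lemma cinner_diff_left: "cinner ((x::'a::complex_inner) - y) z = cinner x z - cinner y z"
  unfolding diff_conv_add_uminus by (simp only: cinner_add_left cinner_minus_left)

lemma power2_norm_eq_cinner: "(norm (x::'a::complex_inner))\<^sup>2 = Re (cinner x x)"
  by (simp add: cinner_self_norm)

lemma cinner_self_eq_zero [simp]: "cinner x x = 0 \<longleftrightarrow> (x::'a::complex_inner) = 0"
  by (simp add: cinner_self_norm)

lemma orthogonal_dense_imp_zero: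
  fixes z :: "'a::complex_inner"
  assumes dense: "closure D = UNIV" and orth: "\<forall>x\<in>D. cinner x z = 0"
  shows "z = 0"
proof -
  have "norm z \<le> norm (x - z)" if "x \<in> D" for x
  proof -
    have "cinner z x = 0" using orth that by (metis cinner_commute complex_cnj_zero)
    then have "(norm (x - z))\<^sup>2 = (norm x)\<^sup>2 + (norm z)\<^sup>2"
      using orth that by (simp add: power2_norm_eq_cinner cinner_diff_left cinner_diff_right)
    then show ?thesis by (simp add: power2_le_imp_le)
  qed
  moreover have "z \<in> closure D" using dense by simp
  ultimately have "norm z < e" if "e > 0" for e
    using that by (fastforce simp: closure_approachable dist_norm)
  then show ?thesis
    by (metis less_irrefl zero_less_norm_iff)
qed

lemma cinner_adj:
  fixes T :: "'a::complex_inner op"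
  assumes "densely_defined T" "y \<in> op_dom (adj T)" "x \<in> op_dom T"
  shows "cinner (app T x) y = cinner x (app (adj T) y)"
proof -
  let ?P = "\<lambda>z. \<forall>x\<in>op_dom T. cinner (app T x) y = cinner x z"
  obtain z where z: "?P z" using assms(2) by (auto simp: adj_def op_dom_def)
  have unique: "z' = z" if "?P z'" for z'
  proof -
    have "\<forall>x\<in>op_dom T. cinner x (z' - z) = 0" using that z by (simp add: cinner_diff_right)
    with assms(1)[unfolded densely_defined_def] have "z' - z = 0" by (rule orthogonal_dense_imp_zero)
    then show ?thesis by simp
  qed
  have "(THE z. ?P z) = z" using z unique by (rule the_equality)
  then have "app (adj T) y = z" using z by (auto simp: adj_def app_def)
  then show ?thesis using z assms(3) by simp
qed

lemma cinner_adj_self: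
  fixes T :: "'a::complex_inner op"
  assumes "densely_defined T" "op_dom T \<subseteq> op_dom (adj T)" "x \<in> op_dom T"
  shows "cinner (app (adj T) x) x = cnj (cinner (app T x) x)"
  using cinner_adj[OF assms(1) _ assms(3), of x] assms(2,3) by (metis cinner_commute subsetD)

lemma re_part_positive_imp_Re_nonneg:
  fixes T :: "'a::complex_inner op"
  assumes "densely_defined T" "op_dom T \<subseteq> op_dom (adj T)" "positive_op (re_part T)"
    and x: "x \<in> op_dom T"
  shows "0 \<le> Re (cinner (app T x) x)"
proof -
  have "x \<in> op_dom (re_part T)" using x assms(2) by (auto simp: re_part_def op_dom_def)
  then have "0 \<le> Re (cinner (app (re_part T) x) x)" using assms(3) by (simp add: positive_op_def)
  moreover have "cinner (app (re_part T) x) x = (cinner (app T x) x + cnj (cinner (app T x) x)) / 2"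
    using cinner_adj_self[OF assms(1,2) x]
    by (simp add: re_part_def app_def cinner_scaleC_left cinner_add_left)
  ultimately show ?thesis by simp
qed

text \<open>The sign flips because cinner is conjugate linear in its first argument.\<close>

lemma im_part_positive_imp_Im_nonpos:
  fixes T :: "'a::complex_inner op"
  assumes "densely_defined T" "op_dom T \<subseteq> op_dom (adj T)" "positive_op (im_part T)"
    and x: "x \<in> op_dom T"
  shows "Im (cinner (app T x) x) \<le> 0"
proof -
  have "x \<in> op_dom (im_part T)" using x assms(2) by (auto simp: im_part_def op_dom_def)
  then have "0 \<le> Re (cinner (app (im_part T) x) x)" using assms(3) by (simp add: positive_op_def)
  moreover have "cinner (app (im_part T) x) x = cnj (1/(2*\<i>)) * (cinner (app T x) x - cnj (cinner (app T x) x))"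
    using cinner_adj_self[OF assms(1,2) x]
    by (simp add: im_part_def app_def cinner_scaleC_left cinner_diff_left)
  moreover have "Re (cnj (1/(2*\<i>)) * (c - cnj c)) = - Im c" for c
    by (simp add: Re_divide Im_divide)
  ultimately show ?thesis by simp
qed

lemma positive_part_imp_numerical_range_in_half_plane:
  fixes T :: "'a::complex_inner op"
  assumes "densely_defined T" "op_dom T \<subseteq> op_dom (adj T)"
    and "positive_op (re_part T) \<or> positive_op (im_part T)"
  obtains \<theta> :: complex where "\<theta> \<noteq> 0" "\<And>x. x \<in> op_dom T \<Longrightarrow> 0 \<le> Re (\<theta> * cinner (app T x) x)"
  using assms(3)
proof
  assume "positive_op (re_part T)"
  then show thesis using that[of 1] re_part_positive_imp_Re_nonneg[OF assms(1,2)] by simp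
next
  assume "positive_op (im_part T)"
  then show thesis using that[of \<i>] im_part_positive_imp_Im_nonpos[OF assms(1,2)] by fastforce
qed

lemma quadratic_nonneg_imp_linear_coeff_zero:
  fixes a b :: real
  assumes "\<And>t. 0 \<le> a * t\<^sup>2 + b * t"
  shows "b = 0"
proof (rule ccontr)
  assume "b \<noteq> 0"
  define c where "c = \<bar>a\<bar> + 1"
  have "0 < c" "a < c" by (simp_all add: c_def)
  have "a * (- b / c)\<^sup>2 + b * (- b / c) = - b\<^sup>2 * (c - a) / c\<^sup>2"
    using \<open>0 < c\<close> by (simp add: field_simps power2_eq_square)
  also have "\<dots> < 0"
    using \<open>b \<noteq> 0\<close> \<open>a < c\<close> \<open>0 < c\<close> by (intro divide_neg_pos mult_neg_pos) auto
  finally show False using assms[of "- b / c"] by simp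
qed

lemma square_zero_imp_zero_if_numerical_range_in_half_plane:
  fixes T :: "'a::complex_inner op"
  assumes lin: "linear_op T" and "\<theta> \<noteq> 0"
    and half_plane: "\<And>x. x \<in> op_dom T \<Longrightarrow> 0 \<le> Re (\<theta> * cinner (app T x) x)"
    and w: "w \<in> op_dom T" "app T w \<in> op_dom T" and "app T (app T w) = 0"
  shows "app T w = 0"
proof -
  define v where "v = app T w"
  define n where "n = (cmod \<theta>)\<^sup>2"
  have "n > 0" using \<open>\<theta> \<noteq> 0\<close> by (simp add: n_def)
  have \<theta>_cnj: "of_real n = \<theta> * cnj \<theta>"
    unfolding n_def by (rule complex_norm_square)
  have "0 \<le> (n * Re (\<theta> * cinner v w)) * t\<^sup>2 + (n * (norm v)\<^sup>2) * t" for t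
  proof -
    define s where "s = of_real t * \<theta>"
    have x: "s *\<^sub>C w + v \<in> op_dom T" and "s *\<^sub>C w \<in> op_dom T"
      using lin w by (simp_all add: linear_op_def csubspace_def v_def)
    then have "app T (s *\<^sub>C w + v) = s *\<^sub>C v"
      using lin w \<open>app T (app T w) = 0\<close> by (simp add: linear_op_def v_def)
    then have "\<theta> * cinner (app T (s *\<^sub>C w + v)) (s *\<^sub>C w + v)
        = of_real (t\<^sup>2 * n) * (\<theta> * cinner v w) + of_real (t * n * (norm v)\<^sup>2)"
      by (simp add: s_def cinner_scaleC_left cinner_add_right cinner_scaleC_right
          cinner_self_norm algebra_simps power2_eq_square \<theta>_cnj)
    then show ?thesis using half_plane[OF x] by (simp add: algebra_simps)
  qed
  then have "n * (norm v)\<^sup>2 = 0" by (rule quadratic_nonneg_imp_linear_coeff_zero)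
  then show ?thesis using \<open>n > 0\<close> by (simp add: v_def)
qed

lemma funpow_Suc_zero_imp_zero:
  fixes f :: "'a::zero \<Rightarrow> 'a"
  assumes "\<And>x. x \<in> D \<Longrightarrow> f x \<in> D" and "\<And>x. x \<in> D \<Longrightarrow> f (f x) = 0 \<Longrightarrow> f x = 0"
  shows "x \<in> D \<Longrightarrow> (f ^^ Suc m) x = 0 \<Longrightarrow> f x = 0"
proof (induction m arbitrary: x)
  case 0
  then show ?case by simp
next
  case (Suc m)
  then have "f (f x) = 0"
    using Suc.IH[of "f x"] assms(1) by (simp only: funpow_Suc_right comp_apply)
  then show ?case using assms(2) Suc.prems(1) by blast
qed

lemma app_op_pow: "app (op_pow T k) = app T ^^ k"
  by (induction k) (simp_all add: op_id_def op_comp_def app_def)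

lemma op_dom_op_pow_Suc:
  "op_dom (op_pow T (Suc k)) = {x \<in> op_dom (op_pow T k). (app T ^^ k) x \<in> op_dom T}"
  by (simp add: op_comp_def op_dom_def app_op_pow[symmetric])

lemma op_dom_op_pow_antimono: "k \<le> n \<Longrightarrow> op_dom (op_pow T n) \<subseteq> op_dom (op_pow T k)"
  by (induction n rule: dec_induct) (auto simp: op_dom_op_pow_Suc simp del: op_pow.simps)

lemma op_dom_op_pow_eq_imp_invariant:
  assumes "2 \<le> n" "op_dom (op_pow T n) = op_dom T" "x \<in> op_dom T"
  shows "app T x \<in> op_dom T"
proof -
  have "x \<in> op_dom (op_pow T (Suc (Suc 0)))"
    using op_dom_op_pow_antimono[OF assms(1), of T] assms(2,3) by (auto simp: numeral_2_eq_2)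
  then show ?thesis by (simp add: op_dom_op_pow_Suc del: op_pow.simps)
qed

lemma nilpotent_imp_zero_if_numerical_range_in_half_plane:
  fixes T :: "'a::complex_inner op"
  assumes lin: "linear_op T" and "\<theta> \<noteq> 0"
    and half_plane: "\<And>x. x \<in> op_dom T \<Longrightarrow> 0 \<le> Re (\<theta> * cinner (app T x) x)"
    and dom: "op_dom (op_pow T n) = op_dom T"
    and nil: "\<And>x. x \<in> op_dom T \<Longrightarrow> app (op_pow T n) x = 0"
    and x: "x \<in> op_dom T"
  shows "app T x = 0"
proof -
  consider "n = 0" | "n = 1" | "2 \<le> n" by linarith
  then show ?thesis
  proof cases
    case 1
    then have "\<forall>y \<in> op_dom T. y = 0" using nil by (simp add: op_id_def app_def)
    then show ?thesis using dom 1 by (simp add: op_id_def op_dom_def)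
  next
    case 2
    then show ?thesis using nil x by (simp add: app_op_pow del: op_pow.simps)
  next
    case 3
    note invariant = op_dom_op_pow_eq_imp_invariant[OF 3 dom]
    have "\<And>y. y \<in> op_dom T \<Longrightarrow> app T (app T y) = 0 \<Longrightarrow> app T y = 0"
      using square_zero_imp_zero_if_numerical_range_in_half_plane[OF lin \<open>\<theta> \<noteq> 0\<close> half_plane]
        invariant by blast
    moreover have "(app T ^^ Suc (n - 1)) x = 0" using nil x 3 by (simp add: app_op_pow del: op_pow.simps)
    ultimately show ?thesis using funpow_Suc_zero_imp_zero invariant x by metis
  qed
qed

lemma closed_dom_if_closed_op_vanishes:
  assumes "closed_op T" "\<And>x. x \<in> op_dom T \<Longrightarrow> app T x = 0"
  shows "closed (op_dom T)"
proof -
  have "op_dom T = (\<lambda>x. (x, 0)) -` graph T" using assms(2) by (auto simp: graph_def)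
  also have "closed \<dots>"
    using assms(1) unfolding closed_op_def by (rule continuous_closed_vimage) (intro continuous_intros)
  finally show ?thesis .
qed

lemma adj_of_zero_op:
  fixes T :: "'a::complex_inner op"
  assumes "op_dom T = UNIV" "\<And>x. app T x = 0"
  shows "op_dom (adj T) = UNIV" "app (adj T) y = 0"
proof -
  show dom: "op_dom (adj T) = UNIV" using assms(2) by (auto simp: adj_def op_dom_def intro!: exI[of _ 0])
  have "densely_defined T" using assms(1) by (simp add: densely_defined_def)
  from cinner_adj[OF this, of y "app (adj T) y"] show "app (adj T) y = 0"
    using assms dom by simp
qed

theorem theorem2p5:
  fixes T :: "'a::chilbert_space op"
  assumes lin: "linear_op T"
    and dense: "densely_defined T"
    and closed: "closed_op T"
    and dom_adj: "op_dom T \<subseteq> op_dom (adj T)"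
    and pos: "positive_op (re_part T) \<or> positive_op (im_part T)"
    and nilp: "\<exists>n. op_dom (op_pow T n) = op_dom T \<and> (\<forall>x\<in>op_dom T. app (op_pow T n) x = 0)"
  shows "in_BH T \<and> normal_op T \<and> (\<forall>x. app T x = 0)"
proof -
  obtain \<theta> :: complex where "\<theta> \<noteq> 0" and half_plane:
      "\<And>x. x \<in> op_dom T \<Longrightarrow> 0 \<le> Re (\<theta> * cinner (app T x) x)"
    using positive_part_imp_numerical_range_in_half_plane[OF dense dom_adj pos] by blast
  obtain n where "op_dom (op_pow T n) = op_dom T" "\<And>x. x \<in> op_dom T \<Longrightarrow> app (op_pow T n) x = 0"
    using nilp by blast
  with lin \<open>\<theta> \<noteq> 0\<close> half_plane have vanishes: "\<And>x. x \<in> op_dom T \<Longrightarrow> app T x = 0"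
    by (rule nilpotent_imp_zero_if_numerical_range_in_half_plane)
  have "closed (op_dom T)" using closed vanishes by (rule closed_dom_if_closed_op_vanishes)
  then have dom: "op_dom T = UNIV" using dense by (simp add: densely_defined_def)
  then have zero: "\<forall>x. app T x = 0" using vanishes by simp
  have "in_BH T" using lin dom zero by (auto simp: in_BH_def intro: exI[of _ 0])
  moreover have "normal_op T"
    using dense closed dom zero adj_of_zero_op[OF dom]
    by (simp add: normal_op_def op_eq_def op_comp_def op_dom_def app_def)
  ultimately show ?thesis using zero by blast
qed

end
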